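(* Let $N,M\ge 1$. Consider the coupled (single-topic) user–creator opinion dynamics $$\mathbf u^{t+1}=(I_N-\Lambda)A\,\mathbf u^{t}+\Lambda\,\mathbf u^{0}+(I_N-\Lambda)B\,\mathbf c^{t},\qquad \mathbf c^{t+1}=(I_M-\Gamma)E\,\mathbf c^{t}+\Gamma\,\mathbf c^{0}+(I_M-\Gamma)C\,\mathbf u^{t},\qquad t=0,1,2,\dots$$ with $\mathbf u^0\in[-1,1]^N$, $\mathbf c^0\in[-1,1]^M$ and with the matrices satisfying the standing assumptions described in the context (in particular, a static user partition). Then the users' opinions reach a steady state: there exists $\mathbf u^*\in\mathbb R^N$ such that $\lim_{t\to\infty}\mathbf u^t=\mathbf u^*$. Moreover, for every user $i\in\{1,\dots,N\}$, the influence of the social network on user $i$, namely $\sum_{j}A_{ij}$, and the influence of the recommended content on user $i$, namely $B_i:=\sum_{j}B_{ij}$, on $\mathbf u^*$ are complementary: $\sum_j A_{ij}+B_i=1$, so increasing one decreases the other.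
   Context: $\mathbf u^t=(u^t_1,\dots,u^t_N)^\top$ collects the opinions of $N$ users and $\mathbf c^t=(c^t_1,\dots,c^t_M)^\top$ those of $M$ content creators at time $t$. Standing assumptions: $\Lambda$ is an $N\times N$ diagonal matrix with diagonal entries $\lambda_i\in(0,1]$ (user stubbornness); $A\in[0,1]^{N\times N}$ is the (sub-stochastic) adjacency matrix of the users' social network, with nonzero diagonal entries ($A_{ij}>0$ means user $j$ influences user $i$). The user partition is static: each user $i$ is assigned to exactly one creator $j(i)$ (the set $\mathcal F_j$ of users consuming creator $j$ does not change over time). $B\in[0,1]^{N\times M}$ satisfies $B_{ij}=0$ whenever $j\neq j(i)$, and $[A\;B]\mathbf 1_{N+M}=\mathbf 1_N$, i.e. $\sum_j A_{ij}+\sum_j B_{ij}=1$ for each $i$. $\Gamma, E\in[0,1]^{M\times M}$ are diagonal matrices (creator stubbornness and creator self-influence), and $C\in[0,1]^{M\times N}$ satisfies $C_{ji}=0$ unless $i\in\mathcal F_j$, with $[E\;C]\mathbf 1_{M+N}=\mathbf 1_M$, i.e. $E_{jj}+\sum_i C_{ji}=1$ for each $j$. *)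

theory Defs
  imports "HOL-Analysis.Analysis"
begin

end

theory Submission
  imports Defs
begin

(* Subtracting consecutive steps cancels the anchoring terms Lam u_0 and Gam c_0, so the
   increments du_t = u_(t+1) - u_t and dc_t = c_(t+1) - c_t obey a homogeneous linear
   recursion: user i's increment is damped by the factor 1 - lam_i < 1, and creator k's
   increment is a combination persistence_k * dc_t + (1 - persistence_k) * (user increments).
   Measured in the weighted norm max(|du|/w, |dc|) with max_i (1 - lam_i) < w < 1, one step
   contracts by some rho < 1, except at creators of persistence 1; these ignore their
   audience (Gam_kk = 0, E_kk = 1, C_k = 0), so their opinion never moves.  Hence the
   increments decay geometrically and u_t converges.  The second claim is the hypothesis
   on the row sums of [A B] itself. *)

lemma diagonal_matrix_vector_mult:
  fixes D :: "'a::comm_ring_1^'n^'n"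
  assumes "\<And>i j. i \<noteq> j \<Longrightarrow> D $ i $ j = 0"
  shows "(D *v v) $ i = D $ i $ i * v $ i"
proof -
  have "(D *v v) $ i = (\<Sum>j\<in>UNIV. D $ i $ j * v $ j)"
    by (simp add: matrix_vector_mult_def)
  also have "\<dots> = (\<Sum>j\<in>UNIV. if j = i then D $ i $ i * v $ i else 0)"
    using assms by (intro sum.cong) auto
  finally show ?thesis by simp
qed

lemma diagonal_complement_matrix_vector_mult:
  fixes D :: "'a::comm_ring_1^'n^'n" and X :: "'a^'m^'n"
  assumes "\<And>i j. i \<noteq> j \<Longrightarrow> D $ i $ j = 0"
  shows "(((mat 1 - D) ** X) *v v) $ i = (1 - D $ i $ i) * (X *v v) $ i"
proof -
  have "(mat 1 - D) $ i $ j = 0" if "i \<noteq> j" for i j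
    using assms that by (simp add: mat_def)
  then show ?thesis
    by (simp add: matrix_vector_mul_assoc[symmetric] diagonal_matrix_vector_mult mat_def)
qed

lemma abs_matrix_vector_mult_le:
  fixes X :: "real^'n^'m"
  assumes "\<And>j. 0 \<le> X $ i $ j" and "\<And>j. \<bar>v $ j\<bar> \<le> K"
  shows "\<bar>(X *v v) $ i\<bar> \<le> (\<Sum>j\<in>UNIV. X $ i $ j) * K"
proof -
  have "\<bar>(X *v v) $ i\<bar> \<le> (\<Sum>j\<in>UNIV. \<bar>X $ i $ j * v $ j\<bar>)"
    unfolding matrix_vector_mult_def by simp
  also have "\<dots> \<le> (\<Sum>j\<in>UNIV. X $ i $ j * K)"
    using assms by (intro sum_mono) (simp add: abs_mult mult_left_mono)
  finally show ?thesis
    by (simp add: sum_distrib_right)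
qed

lemma finite_ex_uniform_less:
  fixes f :: "'a \<Rightarrow> real"
  assumes "finite S" and "\<And>x. x \<in> S \<Longrightarrow> f x < b"
  shows "\<exists>c<b. \<forall>x\<in>S. f x \<le> c"
proof (cases "S = {}")
  case True
  then show ?thesis by (intro exI[of _ "b - 1"]) auto
next
  case False
  then show ?thesis
    using assms by (intro exI[of _ "Max (f ` S)"]) auto
qed

lemma geometric_increments_imp_convergent:
  fixes f :: "nat \<Rightarrow> 'a::banach"
  assumes "\<And>n. norm (f (Suc n) - f n) \<le> M * r ^ n" and "0 \<le> r" and "r < 1"
  shows "convergent f"
proof -
  have "summable (\<lambda>n. f (Suc n) - f n)"
  proof (rule summable_comparison_test')
    show "summable (\<lambda>n. M * r ^ n)"
      using assms(2,3) by (intro summable_mult summable_geometric) simp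
  qed (rule assms(1))
  then have "convergent (\<lambda>n. f 0 + (\<Sum>k<n. f (Suc k) - f k))"
    by (simp add: summable_iff_convergent convergent_add_const_iff)
  then show ?thesis
    by (simp add: sum_lessThan_telescope)
qed

locale user_creator_dynamics =
  fixes Lam A :: "real^'n^'n" and B :: "real^'m^'n"
    and Gam E :: "real^'m^'m" and C :: "real^'n^'m"
    and u :: "nat \<Rightarrow> real^'n" and c :: "nat \<Rightarrow> real^'m"
  assumes Lam_diag: "\<And>i j. i \<noteq> j \<Longrightarrow> Lam $ i $ j = 0"
    and Lam_pos: "\<And>i. 0 < Lam $ i $ i"
    and Lam_le_1: "\<And>i. Lam $ i $ i \<le> 1"
    and A_nonneg: "\<And>i j. 0 \<le> A $ i $ j"
    and B_nonneg: "\<And>i k. 0 \<le> B $ i $ k"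
    and AB_substochastic: "\<And>i. (\<Sum>j\<in>UNIV. A $ i $ j) + (\<Sum>k\<in>UNIV. B $ i $ k) \<le> 1"
    and Gam_diag: "\<And>k l. k \<noteq> l \<Longrightarrow> Gam $ k $ l = 0"
    and Gam_nonneg: "\<And>k. 0 \<le> Gam $ k $ k"
    and Gam_le_1: "\<And>k. Gam $ k $ k \<le> 1"
    and E_diag: "\<And>k l. k \<noteq> l \<Longrightarrow> E $ k $ l = 0"
    and E_nonneg: "\<And>k. 0 \<le> E $ k $ k"
    and C_nonneg: "\<And>k i. 0 \<le> C $ k $ i"
    and EC_substochastic: "\<And>k. E $ k $ k + (\<Sum>i\<in>UNIV. C $ k $ i) \<le> 1"
    and u_step: "\<And>t. u (Suc t) = ((mat 1 - Lam) ** A) *v u t + Lam *v u 0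
                                   + ((mat 1 - Lam) ** B) *v c t"
    and c_step: "\<And>t. c (Suc t) = ((mat 1 - Gam) ** E) *v c t + Gam *v c 0
                                   + ((mat 1 - Gam) ** C) *v u t"
begin

definition du :: "nat \<Rightarrow> real^'n" where "du t = u (Suc t) - u t"

definition dc :: "nat \<Rightarrow> real^'m" where "dc t = c (Suc t) - c t"

definition persistence :: "'m \<Rightarrow> real" where "persistence k = (1 - Gam $ k $ k) * E $ k $ k"

lemma persistence_nonneg: "0 \<le> persistence k"
  using Gam_le_1 E_nonneg by (simp add: persistence_def)

lemma E_le_1: "E $ k $ k \<le> 1"
proof -
  have "0 \<le> (\<Sum>i\<in>UNIV. C $ k $ i)"
    using C_nonneg by (simp add: sum_nonneg)
  then show ?thesis
    using EC_substochastic[of k] by linarith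
qed

lemma persistence_le_1: "persistence k \<le> 1"
  using Gam_nonneg[of k] E_nonneg[of k] E_le_1[of k] by (simp add: persistence_def mult_le_one)

lemma du_Suc: "du (Suc t) $ i = (1 - Lam $ i $ i) * ((A *v du t) $ i + (B *v dc t) $ i)"
proof -
  have "du (Suc t) = ((mat 1 - Lam) ** A) *v du t + ((mat 1 - Lam) ** B) *v dc t"
    using u_step[of "Suc t"] u_step[of t] by (simp add: du_def dc_def algebra_simps)
  then show ?thesis
    by (simp add: diagonal_complement_matrix_vector_mult[OF Lam_diag] algebra_simps)
qed

lemma dc_Suc: "dc (Suc t) $ k = persistence k * dc t $ k + (1 - Gam $ k $ k) * (C *v du t) $ k"
proof -
  have "dc (Suc t) = ((mat 1 - Gam) ** E) *v dc t + ((mat 1 - Gam) ** C) *v du t"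
    using c_step[of "Suc t"] c_step[of t] by (simp add: du_def dc_def algebra_simps)
  then show ?thesis
    by (simp add: diagonal_complement_matrix_vector_mult[OF Gam_diag]
        diagonal_matrix_vector_mult[OF E_diag] persistence_def)
qed

lemma dc_eq_0_if_persistence_1:
  assumes "persistence k = 1"
  shows "dc t $ k = 0"
proof -
  have "(1 - Gam $ k $ k) * E $ k $ k \<le> E $ k $ k"
    using Gam_nonneg[of k] Gam_le_1[of k] E_nonneg[of k] by (simp add: mult_left_le_one_le)
  with E_le_1[of k] have E1: "E $ k $ k = 1" and Gam0: "Gam $ k $ k = 0"
    using assms by (auto simp: persistence_def)
  then have "(\<Sum>i\<in>UNIV. C $ k $ i) \<le> 0"
    using EC_substochastic[of k] by simp
  then have "C $ k $ i = 0" for i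
    using C_nonneg sum_nonneg_eq_0_iff[of UNIV "\<lambda>i. C $ k $ i"]
    by (simp add: antisym sum_nonneg)
  then have "(C *v v) $ k = 0" for v :: "real^'n"
    by (simp add: matrix_vector_mult_def)
  then have "c (Suc t) $ k = c t $ k"
    using c_step[of t]
    by (simp add: diagonal_complement_matrix_vector_mult[OF Gam_diag]
        diagonal_matrix_vector_mult[OF E_diag] diagonal_matrix_vector_mult[OF Gam_diag] Gam0 E1)
  then show ?thesis by (simp add: dc_def)
qed

lemma du_Suc_bound:
  assumes "\<And>j. \<bar>du t $ j\<bar> \<le> K" and "\<And>k. \<bar>dc t $ k\<bar> \<le> K"
  shows "\<bar>du (Suc t) $ i\<bar> \<le> (1 - Lam $ i $ i) * K"
proof -
  have "0 \<le> K"
    using assms(1)[of undefined] by (meson abs_ge_zero order_trans)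
  have "\<bar>(A *v du t) $ i + (B *v dc t) $ i\<bar>
      \<le> (\<Sum>j\<in>UNIV. A $ i $ j) * K + (\<Sum>k\<in>UNIV. B $ i $ k) * K"
    by (rule order_trans[OF abs_triangle_ineq add_mono[OF
          abs_matrix_vector_mult_le[OF A_nonneg assms(1)]
          abs_matrix_vector_mult_le[OF B_nonneg assms(2)]]])
  also have "\<dots> \<le> K"
    using mult_right_mono[OF AB_substochastic[of i] \<open>0 \<le> K\<close>] by (simp add: distrib_right)
  finally show ?thesis
    using Lam_le_1[of i] by (simp add: du_Suc abs_mult mult_left_mono)
qed

lemma dc_Suc_bound:
  assumes "\<bar>dc t $ k\<bar> \<le> X" and "\<And>i. \<bar>du t $ i\<bar> \<le> Y"
  shows "\<bar>dc (Suc t) $ k\<bar> \<le> persistence k * X + (1 - persistence k) * Y"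
proof -
  have "0 \<le> Y"
    using assms(2)[of undefined] by (meson abs_ge_zero order_trans)
  have "\<bar>(C *v du t) $ k\<bar> \<le> (\<Sum>i\<in>UNIV. C $ k $ i) * Y"
    using C_nonneg assms(2) by (rule abs_matrix_vector_mult_le)
  also have "\<dots> \<le> (1 - E $ k $ k) * Y"
    using EC_substochastic[of k] \<open>0 \<le> Y\<close> by (intro mult_right_mono) auto
  finally have "(1 - Gam $ k $ k) * \<bar>(C *v du t) $ k\<bar>
      \<le> (1 - Gam $ k $ k) * (1 - E $ k $ k) * Y"
    using Gam_le_1[of k] by (simp add: mult.assoc mult_left_mono)
  also have "\<dots> \<le> (1 - persistence k) * Y"
    using Gam_nonneg[of k] \<open>0 \<le> Y\<close>
    by (intro mult_right_mono) (auto simp: persistence_def algebra_simps)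
  finally have "\<bar>(1 - Gam $ k $ k) * (C *v du t) $ k\<bar> \<le> (1 - persistence k) * Y"
    using Gam_le_1[of k] by (simp add: abs_mult)
  moreover have "\<bar>persistence k * dc t $ k\<bar> \<le> persistence k * X"
    using assms(1) persistence_nonneg[of k] by (simp add: abs_mult mult_left_mono)
  ultimately show ?thesis
    unfolding dc_Suc by (intro order_trans[OF abs_triangle_ineq add_mono])
qed

lemma contraction_weights:
  obtains w rho where "0 < w" "w \<le> 1" "0 \<le> rho" "rho < 1"
    and "\<And>i. 1 - Lam $ i $ i \<le> w * rho"
    and "\<And>k. persistence k < 1 \<Longrightarrow> persistence k + (1 - persistence k) * w \<le> rho"
proof -
  obtain a where "a < 1" and a: "\<And>i. 1 - Lam $ i $ i \<le> a"
    using finite_ex_uniform_less[of UNIV "\<lambda>i. 1 - Lam $ i $ i" 1] Lam_pos by auto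
  have "0 \<le> a"
    using a[of undefined] Lam_le_1[of undefined] by linarith
  define w where "w = (1 + a) / 2"
  have "0 < w" "w < 1" "a < w"
    using \<open>0 \<le> a\<close> \<open>a < 1\<close> by (auto simp: w_def)
  have "persistence k + (1 - persistence k) * w < 1" if "persistence k < 1" for k
  proof -
    have "(1 - persistence k) * w < (1 - persistence k) * 1"
      using \<open>w < 1\<close> that by (intro mult_strict_left_mono) auto
    then show ?thesis by simp
  qed
  then obtain r where "r < 1"
    and r: "\<And>k. persistence k < 1 \<Longrightarrow> persistence k + (1 - persistence k) * w \<le> r"
    using finite_ex_uniform_less[of "{k. persistence k < 1}"
        "\<lambda>k. persistence k + (1 - persistence k) * w" 1]
    by auto
  show thesis
  proof (rule that[of w "max (a / w) r"])
    show "1 - Lam $ i $ i \<le> w * max (a / w) r" for i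
    proof -
      have "1 - Lam $ i $ i \<le> w * (a / w)"
        using a[of i] \<open>0 < w\<close> by simp
      also have "\<dots> \<le> w * max (a / w) r"
        using \<open>0 < w\<close> by (intro mult_left_mono) auto
      finally show ?thesis .
    qed
    show "max (a / w) r < 1"
      using \<open>a < w\<close> \<open>0 < w\<close> \<open>r < 1\<close> by (simp add: divide_less_eq)
  qed (use \<open>0 < w\<close> \<open>w < 1\<close> \<open>0 \<le> a\<close> r in \<open>auto simp: le_max_iff_disj\<close>)
qed

lemma increments_decay:
  assumes "w \<le> 1" "0 \<le> rho"
    and Lam_weight: "\<And>i. 1 - Lam $ i $ i \<le> w * rho"
    and persistence_weight:
      "\<And>k. persistence k < 1 \<Longrightarrow> persistence k + (1 - persistence k) * w \<le> rho"
    and du_0: "\<And>i. \<bar>du 0 $ i\<bar> \<le> w * M" and dc_0: "\<And>k. \<bar>dc 0 $ k\<bar> \<le> M"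
  shows "(\<forall>i. \<bar>du t $ i\<bar> \<le> w * (M * rho ^ t)) \<and> (\<forall>k. \<bar>dc t $ k\<bar> \<le> M * rho ^ t)"
proof (induction t)
  case 0
  then show ?case using du_0 dc_0 by simp
next
  case (Suc t)
  define K where "K = M * rho ^ t"
  have "0 \<le> K"
    using order_trans[OF abs_ge_zero dc_0] \<open>0 \<le> rho\<close> by (simp add: K_def)
  have du_t_w: "\<bar>du t $ i\<bar> \<le> w * K" and dc_t: "\<bar>dc t $ k\<bar> \<le> K" for i k
    using Suc unfolding K_def by blast+
  have du_t: "\<bar>du t $ i\<bar> \<le> K" for i
    using du_t_w[of i] mult_right_mono[OF \<open>w \<le> 1\<close> \<open>0 \<le> K\<close>] by simp
  have "\<bar>du (Suc t) $ i\<bar> \<le> w * (rho * K)" for i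
  proof -
    have "\<bar>du (Suc t) $ i\<bar> \<le> (1 - Lam $ i $ i) * K"
      using du_t dc_t by (rule du_Suc_bound)
    also have "\<dots> \<le> w * rho * K"
      using Lam_weight[of i] \<open>0 \<le> K\<close> by (rule mult_right_mono)
    finally show ?thesis by simp
  qed
  moreover have "\<bar>dc (Suc t) $ k\<bar> \<le> rho * K" for k
  proof (cases "persistence k = 1")
    case True
    then show ?thesis using dc_eq_0_if_persistence_1 \<open>0 \<le> rho\<close> \<open>0 \<le> K\<close> by simp
  next
    case False
    then have "persistence k < 1" using persistence_le_1[of k] by simp
    have "\<bar>dc (Suc t) $ k\<bar> \<le> persistence k * K + (1 - persistence k) * (w * K)"
      using dc_t du_t_w by (rule dc_Suc_bound)
    also have "\<dots> = (persistence k + (1 - persistence k) * w) * K"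
      by (simp add: algebra_simps)
    also have "\<dots> \<le> rho * K"
      using persistence_weight[OF \<open>persistence k < 1\<close>] \<open>0 \<le> K\<close> by (rule mult_right_mono)
    finally show ?thesis .
  qed
  ultimately show ?case by (simp add: K_def ac_simps)
qed

lemma u_convergent: "convergent u"
proof -
  obtain w rho where w: "0 < w" "w \<le> 1" and rho: "0 \<le> rho" "rho < 1"
    and weights: "\<And>i. 1 - Lam $ i $ i \<le> w * rho"
      "\<And>k. persistence k < 1 \<Longrightarrow> persistence k + (1 - persistence k) * w \<le> rho"
    using contraction_weights by blast
  define M where "M = norm (du 0) / w + norm (dc 0)"
  have "w * M = norm (du 0) + w * norm (dc 0)"
    using w by (simp add: M_def distrib_left)
  then have du_0: "\<bar>du 0 $ i\<bar> \<le> w * M" for i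
    using component_le_norm_cart[of "du 0" i] w by (simp add: add_increasing2)
  have dc_0: "\<bar>dc 0 $ k\<bar> \<le> M" for k
    using component_le_norm_cart[of "dc 0" k] w by (simp add: M_def add_increasing)
  have du_decay: "\<bar>du t $ i\<bar> \<le> w * (M * rho ^ t)" for t i
    using increments_decay[OF w(2) rho(1) weights du_0 dc_0] by blast
  have "norm (u (Suc t) - u t) \<le> (CARD('n) * w * M) * rho ^ t" for t
  proof -
    have "norm (du t) \<le> (\<Sum>i\<in>UNIV. \<bar>du t $ i\<bar>)"
      by (rule norm_le_l1_cart)
    also have "\<dots> \<le> CARD('n) * (w * (M * rho ^ t))"
      using du_decay by (simp add: sum_bounded_above)
    finally show ?thesis by (simp add: du_def ac_simps)
  qed
  then show ?thesis
    using rho by (rule geometric_increments_imp_convergent)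
qed

end

theorem theorem1:
  fixes Lam A :: "real^'n^'n" and B :: "real^'m^'n"
    and Gam E :: "real^'m^'m" and C :: "real^'n^'m"
    and jf :: "'n \<Rightarrow> 'm"
    and u :: "nat \<Rightarrow> real^'n" and c :: "nat \<Rightarrow> real^'m"
  assumes Lam_diag: "\<forall>i j. i \<noteq> j \<longrightarrow> Lam $ i $ j = 0"
    and Lam_range: "\<forall>i. 0 < Lam $ i $ i \<and> Lam $ i $ i \<le> 1"
    and A_range: "\<forall>i j. 0 \<le> A $ i $ j \<and> A $ i $ j \<le> 1"
    and A_diag_pos: "\<forall>i. A $ i $ i \<noteq> 0"
    and B_range: "\<forall>i k. 0 \<le> B $ i $ k \<and> B $ i $ k \<le> 1"
    and B_partition: "\<forall>i k. k \<noteq> jf i \<longrightarrow> B $ i $ k = 0"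
    and AB_stoch: "\<forall>i. (\<Sum>j\<in>UNIV. A $ i $ j) + (\<Sum>k\<in>UNIV. B $ i $ k) = 1"
    and Gam_diag: "\<forall>k l. k \<noteq> l \<longrightarrow> Gam $ k $ l = 0"
    and Gam_range: "\<forall>k. 0 \<le> Gam $ k $ k \<and> Gam $ k $ k \<le> 1"
    and E_diag: "\<forall>k l. k \<noteq> l \<longrightarrow> E $ k $ l = 0"
    and E_range: "\<forall>k. 0 \<le> E $ k $ k \<and> E $ k $ k \<le> 1"
    and C_range: "\<forall>k i. 0 \<le> C $ k $ i \<and> C $ k $ i \<le> 1"
    and C_partition: "\<forall>k i. jf i \<noteq> k \<longrightarrow> C $ k $ i = 0"
    and EC_stoch: "\<forall>k. E $ k $ k + (\<Sum>i\<in>UNIV. C $ k $ i) = 1"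
    and u0_range: "\<forall>i. \<bar>u 0 $ i\<bar> \<le> 1"
    and c0_range: "\<forall>k. \<bar>c 0 $ k\<bar> \<le> 1"
    and u_step: "\<forall>t. u (Suc t) = ((mat 1 - Lam) ** A) *v u t + Lam *v u 0
                                   + ((mat 1 - Lam) ** B) *v c t"
    and c_step: "\<forall>t. c (Suc t) = ((mat 1 - Gam) ** E) *v c t + Gam *v c 0
                                   + ((mat 1 - Gam) ** C) *v u t"
  shows "(\<exists>ustar. u \<longlonglongrightarrow> ustar) \<and>
         (\<forall>i. (\<Sum>j\<in>UNIV. A $ i $ j) + (\<Sum>k\<in>UNIV. B $ i $ k) = 1)"
proof -
  interpret user_creator_dynamics Lam A B Gam E C u c
  proof
    show "(\<Sum>j\<in>UNIV. A $ i $ j) + (\<Sum>k\<in>UNIV. B $ i $ k) \<le> 1" for i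
      using AB_stoch by simp
    show "E $ k $ k + (\<Sum>i\<in>UNIV. C $ k $ i) \<le> 1" for k
      using EC_stoch by simp
  qed (use Lam_diag Lam_range A_range B_range Gam_diag Gam_range E_diag E_range C_range
         u_step c_step in auto)
  show ?thesis
    using u_convergent AB_stoch by (simp add: convergent_def)
qed

end
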